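(* Let $f(\alpha,\beta)$, $g(\alpha,\beta)$, $h(\alpha)$ be functions that are $2\pi$-periodic in each argument and satisfy $f(\alpha,\beta)=-f(\beta,\alpha)$ and $g(\alpha,\beta)=-g(\beta,\alpha)$. Consider the quad-equation on a rhombus with black vertices $x_0,x_{12}$ and white vertices $x_1,x_2$, where $x_1-x_0=e^{i\alpha}$, $x_2-x_0=e^{i\beta}$ (as points of $\mathbb C$), written in its four "centered" forms \begin{align*} (E_0)&\quad f(\alpha,\beta)x_{12}-g(\alpha,\beta)x_0=i\big(h(\beta)x_2-h(\alpha)x_1\big),\\ (E_{12})&\quad f(\alpha+\pi,\beta+\pi)x_0-g(\alpha+\pi,\beta+\pi)x_{12}=i\big(h(\beta+\pi)x_1-h(\alpha+\pi)x_2\big),\\ (E_1)&\quad f(\beta+\pi,\alpha)x_2-g(\beta+\pi,\alpha)x_1=i\big(h(\alpha)x_0-h(\beta+\pi)x_{12}\big),\\ (E_2)&\quad f(\alpha+\pi,\beta)x_1-g(\alpha+\pi,\beta)x_2=i\big(h(\beta)x_0-h(\alpha+\pi)x_{12}\big). \end{align*} The quad-equation is symmetric with respect to centering the quad at any of its four vertices (i.e., for all $\alpha,\beta$ the four linear equations $(E_0),(E_{12}),(E_1),(E_2)$ in $x_0,x_1,x_2,x_{12}$ have proportional coefficient vectors) if and only if there is a constant $c\neq0$ such that for all $\alpha,\beta$ $$h(\alpha)h(\alpha+\pi)=c,\qquad f(\alpha,\beta)f(\alpha+\pi,\beta)=-c,\qquad g(\alpha,\beta)=c^{-1}f(\alpha,\beta)h(\alpha)h(\beta).$$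 Moreover, these conditions together with the skew-symmetry of $f$ imply $f(\alpha,\beta)=f(\alpha+\pi,\beta+\pi)$.
   Context: The quad-equations live on a bipartite quad-graph rhombically embedded in $\mathbb C$ (all faces are rhombi with unit sides), with black and white vertices; edges are directed from black to white and labelled by $\alpha$ where $e^{i\alpha}$ is the edge vector. Opposite edges of a face, directed black-to-white, carry labels differing by $\pi$. *)

theory Defs
  imports Complex_Main
begin

text \<open>Coefficient vectors, in the variable order (x0, x1, x2, x12), of the four
centered forms of the quad-equation, each written as (LHS - RHS = 0).\<close>

definition coeffE0 :: "(real \<Rightarrow> real \<Rightarrow> complex) \<Rightarrow> (real \<Rightarrow> real \<Rightarrow> complex) \<Rightarrow> (real \<Rightarrow> complex)
    \<Rightarrow> real \<Rightarrow> real \<Rightarrow> complex list" where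
  "coeffE0 f g h a b = [- g a b, \<i> * h a, - \<i> * h b, f a b]"

definition coeffE12 :: "(real \<Rightarrow> real \<Rightarrow> complex) \<Rightarrow> (real \<Rightarrow> real \<Rightarrow> complex) \<Rightarrow> (real \<Rightarrow> complex)
    \<Rightarrow> real \<Rightarrow> real \<Rightarrow> complex list" where
  "coeffE12 f g h a b = [f (a + pi) (b + pi), - \<i> * h (b + pi), \<i> * h (a + pi), - g (a + pi) (b + pi)]"

definition coeffE1 :: "(real \<Rightarrow> real \<Rightarrow> complex) \<Rightarrow> (real \<Rightarrow> real \<Rightarrow> complex) \<Rightarrow> (real \<Rightarrow> complex)
    \<Rightarrow> real \<Rightarrow> real \<Rightarrow> complex list" where
  "coeffE1 f g h a b = [- \<i> * h a, - g (b + pi) a, f (b + pi) a, \<i> * h (b + pi)]"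

definition coeffE2 :: "(real \<Rightarrow> real \<Rightarrow> complex) \<Rightarrow> (real \<Rightarrow> real \<Rightarrow> complex) \<Rightarrow> (real \<Rightarrow> complex)
    \<Rightarrow> real \<Rightarrow> real \<Rightarrow> complex list" where
  "coeffE2 f g h a b = [- \<i> * h b, f (a + pi) b, - g (a + pi) b, \<i> * h (a + pi)]"

definition proportional :: "complex list \<Rightarrow> complex list \<Rightarrow> bool" where
  "proportional u v \<longleftrightarrow> (\<exists>x\<in>set u. x \<noteq> 0) \<and> (\<exists>l. l \<noteq> 0 \<and> v = map (\<lambda>x. l * x) u)"

definition centering_symmetric ::
  "(real \<Rightarrow> real \<Rightarrow> complex) \<Rightarrow> (real \<Rightarrow> real \<Rightarrow> complex) \<Rightarrow> (real \<Rightarrow> complex) \<Rightarrow> bool" where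
  "centering_symmetric f g h \<longleftrightarrow> (\<forall>a b.
      proportional (coeffE0 f g h a b) (coeffE12 f g h a b) \<and>
      proportional (coeffE0 f g h a b) (coeffE1 f g h a b) \<and>
      proportional (coeffE0 f g h a b) (coeffE2 f g h a b))"

end

theory Submission
  imports Defs
begin

text \<open>Comparing coefficients, the proportionality of (E0) with (E1), (E2) and (E12) expresses
h(a+\<pi>), f(a+\<pi>,b) and g through h, f, g and three nonzero multipliers. The x0-coefficients
i h(a) of (E1) and i h(b) of (E2) are both multiples of g(a,b), so a zero of h would force h, f and g to vanish
identically, contradicting that (E0) is a genuine equation. The two h-coefficients of (E12)
then show that h(a) h(a+\<pi>) does not depend on a, and the remaining conditions follow by
eliminating the multipliers. Skew
symmetry turns f(a,b) f(a+\<pi>,b) = -c into f(a,b) f(a,b+\<pi>) = -c, and comparing the two gives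
f(a+\<pi>,b+\<pi>) = f(a,b).\<close>

definition centering_conditions ::
  "(real \<Rightarrow> real \<Rightarrow> complex) \<Rightarrow> (real \<Rightarrow> real \<Rightarrow> complex) \<Rightarrow> (real \<Rightarrow> complex) \<Rightarrow> complex \<Rightarrow> bool"
where
  "centering_conditions f g h c \<longleftrightarrow> c \<noteq> 0 \<and> (\<forall>a b. h a * h (a + pi) = c
      \<and> f a b * f (a + pi) b = - c \<and> g a b = f a b * h a * h b / c)"

lemma proportional_list4_iff:
  "proportional [a1, a2, a3, a4] [b1, b2, b3, b4] \<longleftrightarrow>
    (a1 \<noteq> 0 \<or> a2 \<noteq> 0 \<or> a3 \<noteq> 0 \<or> a4 \<noteq> 0) \<and>
    (\<exists>l. l \<noteq> 0 \<and> b1 = l * a1 \<and> b2 = l * a2 \<and> b3 = l * a3 \<and> b4 = l * a4)"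
  by (auto simp: proportional_def)

context
  fixes f g :: "real \<Rightarrow> real \<Rightarrow> complex" and h :: "real \<Rightarrow> complex"
  assumes sym: "centering_symmetric f g h"
begin

lemma centering_symmetric_E0_nontrivial: "g a b \<noteq> 0 \<or> h a \<noteq> 0 \<or> h b \<noteq> 0 \<or> f a b \<noteq> 0"
  using sym by (auto simp: centering_symmetric_def coeffE0_def coeffE12_def proportional_list4_iff)

lemma centering_symmetric_E12:
  obtains n where "h (b + pi) = - n * h a" "h (a + pi) = - n * h b"
proof -
  obtain n where "- \<i> * h (b + pi) = n * (\<i> * h a)" "\<i> * h (a + pi) = n * (- \<i> * h b)"
    using sym by (auto simp: centering_symmetric_def coeffE0_def coeffE12_def proportional_list4_iff)
  then have "h (b + pi) = - n * h a" "h (a + pi) = - n * h b"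
    by (auto simp: complex_eq_iff)
  then show thesis by (rule that)
qed

lemma centering_symmetric_E1:
  obtains m where "m \<noteq> 0" "\<i> * h a = m * g a b" "\<i> * h (b + pi) = m * f a b"
proof -
  obtain m where "m \<noteq> 0" "- \<i> * h a = m * - g a b" "\<i> * h (b + pi) = m * f a b"
    using sym by (auto simp: centering_symmetric_def coeffE0_def coeffE1_def proportional_list4_iff)
  then show thesis by (intro that[of m]) auto
qed

lemma centering_symmetric_E2:
  obtains l where "l \<noteq> 0" "\<i> * h b = l * g a b" "f (a + pi) b = l * \<i> * h a"
    "\<i> * h (a + pi) = l * f a b"
proof -
  obtain l where "l \<noteq> 0" "- \<i> * h b = l * - g a b" "f (a + pi) b = l * (\<i> * h a)"
    "\<i> * h (a + pi) = l * f a b"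
    using sym by (auto simp: centering_symmetric_def coeffE0_def coeffE2_def proportional_list4_iff)
  then show thesis by (intro that[of l]) auto
qed

lemma centering_symmetric_h_nonzero: "h a \<noteq> 0"
proof
  assume "h a = 0"
  have h_zero: "h b = 0" for b
  proof -
    obtain m where "m \<noteq> 0" "\<i> * h a = m * g a b" by (rule centering_symmetric_E1)
    with \<open>h a = 0\<close> have "g a b = 0" by simp
    moreover obtain l where "\<i> * h b = l * g a b" by (rule centering_symmetric_E2)
    ultimately show ?thesis by simp
  qed
  obtain m where "m \<noteq> 0" "\<i> * h 0 = m * g 0 0" by (rule centering_symmetric_E1)
  moreover obtain l where "l \<noteq> 0" "\<i> * h (0 + pi) = l * f 0 0" by (rule centering_symmetric_E2)
  ultimately have "g 0 0 = 0" "f 0 0 = 0" using h_zero by simp_all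
  with h_zero centering_symmetric_E0_nontrivial[of 0 0] show False by simp
qed

lemma centering_symmetric_h_product_const: "h a * h (a + pi) = h b * h (b + pi)"
proof -
  obtain n where "h (b + pi) = - n * h a" "h (a + pi) = - n * h b"
    by (rule centering_symmetric_E12)
  then show ?thesis by simp
qed

lemma centering_symmetric_imp_conditions: "centering_conditions f g h (h 0 * h pi)"
proof -
  define c where "c = h 0 * h pi"
  have hh: "h a * h (a + pi) = c" for a
    using centering_symmetric_h_product_const[of a 0] by (simp add: c_def)
  have "c \<noteq> 0"
    using centering_symmetric_h_nonzero[of 0] centering_symmetric_h_nonzero[of pi] by (simp add: c_def)
  have ff: "f a b * f (a + pi) b = - c" for a b
  proof -
    obtain l where "l \<noteq> 0" "f (a + pi) b = l * \<i> * h a" "\<i> * h (a + pi) = l * f a b"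
      by (rule centering_symmetric_E2)
    then have "l * (f a b * f (a + pi) b) = \<i> * h (a + pi) * (l * \<i> * h a)"
      by (simp add: algebra_simps)
    also have "\<dots> = l * - c"
      using hh[of a] \<open>l \<noteq> 0\<close> by (simp add: algebra_simps)
    finally show ?thesis using \<open>l \<noteq> 0\<close> by (metis mult_left_cancel)
  qed
  have gg: "g a b = f a b * h a * h b / c" for a b
  proof -
    obtain m where "m \<noteq> 0" and hg: "\<i> * h a = m * g a b" and hf: "\<i> * h (b + pi) = m * f a b"
      by (rule centering_symmetric_E1)
    have "m * (g a b * (h b * h (b + pi))) = (m * g a b) * (h b * h (b + pi))"
      by (simp only: mult.assoc)
    also have "\<dots> = h a * h b * (\<i> * h (b + pi))"
      by (simp only: hg[symmetric] ac_simps)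
    also have "\<dots> = h a * h b * (m * f a b)"
      by (simp only: hf)
    also have "\<dots> = m * (f a b * h a * h b)"
      by (simp only: ac_simps)
    finally have "m * (g a b * (h b * h (b + pi))) = m * (f a b * h a * h b)" .
    with \<open>m \<noteq> 0\<close> \<open>c \<noteq> 0\<close> hh[of b] show ?thesis by (simp add: field_simps)
  qed
  show ?thesis
    unfolding centering_conditions_def c_def[symmetric] using \<open>c \<noteq> 0\<close> hh ff gg by blast
qed

end

lemma skew_shift_product_second:
  fixes f :: "real \<Rightarrow> real \<Rightarrow> complex"
  assumes skew: "\<And>a b. f a b = - f b a" and ff: "\<And>a b. f a b * f (a + pi) b = - c"
  shows "f a b * f a (b + pi) = - c"
  using ff[of b a] skew[of a b] skew[of a "b + pi"] by simp

lemma skew_shift_both_eq: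
  fixes f :: "real \<Rightarrow> real \<Rightarrow> complex"
  assumes skew: "\<And>a b. f a b = - f b a"
    and "c \<noteq> 0" and ff: "\<And>a b. f a b * f (a + pi) b = - c"
  shows "f a b = f (a + pi) (b + pi)"
proof -
  have "f (a + pi) b * f (a + pi) (b + pi) = f (a + pi) b * f a b"
    using skew_shift_product_second[where f=f, OF skew ff, of "a + pi" b] ff[of a b] by (simp add: mult.commute)
  moreover have "f (a + pi) b \<noteq> 0"
    using ff[of a b] \<open>c \<noteq> 0\<close> by auto
  ultimately show ?thesis by simp
qed

lemma conditions_imp_centering_symmetric:
  fixes f g :: "real \<Rightarrow> real \<Rightarrow> complex" and h :: "real \<Rightarrow> complex"
  assumes skew: "\<And>a b. f a b = - f b a" and cond: "centering_conditions f g h c"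
  shows "centering_symmetric f g h"
proof -
  have "c \<noteq> 0" and hh: "\<And>a. h a * h (a + pi) = c"
    and ff: "\<And>a b. f a b * f (a + pi) b = - c" and gg: "\<And>a b. g a b = f a b * h a * h b / c"
    using cond by (auto simp: centering_conditions_def)
  have h_nz: "h a \<noteq> 0" for a
    using hh[of a] \<open>c \<noteq> 0\<close> by auto
  have f_nz: "f a b \<noteq> 0" for a b
    using ff[of a b] \<open>c \<noteq> 0\<close> by auto
  have h_shift: "h (a + pi) = c / h a" for a
    using hh[of a] h_nz[of a] by (simp add: field_simps)
  have f_shift1: "f (a + pi) b = - c / f a b" for a b
    using ff[of a b] f_nz[of a b] by (simp add: field_simps)
  have f_shift2: "f a (b + pi) = - c / f a b" for a b
    using skew_shift_product_second[where f=f, OF skew ff, of a b] f_nz[of a b] by (simp add: field_simps)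
  have f_shift12: "f (a + pi) (b + pi) = f a b" for a b
    using skew_shift_both_eq[where f=f, OF skew \<open>c \<noteq> 0\<close> ff] by simp
  note shifts = gg h_shift f_shift1 f_shift2 f_shift12
  show ?thesis
    unfolding centering_symmetric_def
  proof (intro allI conjI)
    fix a b
    note nz = f_nz[of a b] h_nz[of a] h_nz[of b] \<open>c \<noteq> 0\<close>
    note skew_ba = skew[of b a]
    show "proportional (coeffE0 f g h a b) (coeffE12 f g h a b)"
      unfolding coeffE0_def coeffE12_def proportional_list4_iff
      by (intro conjI exI[of _ "- c / (h a * h b)"]) (use nz in \<open>simp_all add: shifts skew_ba, (simp_all add: field_simps)?\<close>)
    show "proportional (coeffE0 f g h a b) (coeffE1 f g h a b)"
      unfolding coeffE0_def coeffE1_def proportional_list4_iff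
      by (intro conjI exI[of _ "\<i> * c / (h b * f a b)"]) (use nz in \<open>simp_all add: shifts skew_ba, (simp_all add: field_simps)?\<close>)
    show "proportional (coeffE0 f g h a b) (coeffE2 f g h a b)"
      unfolding coeffE0_def coeffE2_def proportional_list4_iff
      by (intro conjI exI[of _ "\<i> * c / (h a * f a b)"]) (use nz in \<open>simp_all add: shifts skew_ba, (simp_all add: field_simps)?\<close>)
  qed
qed

theorem lemma1:
  fixes f g :: "real \<Rightarrow> real \<Rightarrow> complex" and h :: "real \<Rightarrow> complex"
  assumes f_per: "\<And>a b. f (a + 2*pi) b = f a b" "\<And>a b. f a (b + 2*pi) = f a b"
    and g_per: "\<And>a b. g (a + 2*pi) b = g a b" "\<And>a b. g a (b + 2*pi) = g a b"
    and h_per: "\<And>a. h (a + 2*pi) = h a"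
    and f_skew: "\<And>a b. f a b = - f b a"
    and g_skew: "\<And>a b. g a b = - g b a"
  shows "(centering_symmetric f g h \<longleftrightarrow>
           (\<exists>c. c \<noteq> 0 \<and> (\<forall>a b. h a * h (a + pi) = c \<and> f a b * f (a + pi) b = - c
                                 \<and> g a b = f a b * h a * h b / c)))
       \<and> ((\<exists>c. c \<noteq> 0 \<and> (\<forall>a b. h a * h (a + pi) = c \<and> f a b * f (a + pi) b = - c
                                 \<and> g a b = f a b * h a * h b / c))
            \<longrightarrow> (\<forall>a b. f a b = f (a + pi) (b + pi)))"
proof -
  have "centering_symmetric f g h \<longleftrightarrow> (\<exists>c. centering_conditions f g h c)"
    using centering_symmetric_imp_conditions conditions_imp_centering_symmetric[where f=f, OF f_skew]
    by blast
  moreover have "f a b = f (a + pi) (b + pi)" if "centering_conditions f g h c" for a b c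
    using that by (intro skew_shift_both_eq[where f=f, OF f_skew]) (auto simp: centering_conditions_def)
  ultimately show ?thesis
    unfolding centering_conditions_def[symmetric] by blast
qed

end
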